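(* Let $p_1,p_2$ be primes with $p_1\equiv 1 \pmod 4$ and $p_2\equiv 3\pmod 4$, let $m,n$ be positive integers, and let $N=p_1^mp_2^n$. Let $p$ be a prime such that $\mathrm{ord}_{p_1^m}(p)=\phi(p_1^m)$, $\mathrm{ord}_{p_2^n}(p)=\phi(p_2^n)$ and $f:=\mathrm{ord}_N(p)=\phi(N)/2$, where $\phi$ is Euler's totient function. Let $q=p^f$, let $\gamma$ be a primitive element of $\mathbb{F}_q$, and let $C_i=\gamma^i\langle\gamma^N\rangle$ for $0\le i\le N-1$ (indices read modulo $N$). Define $$D=\bigcup_{i=0}^{p_1^{m-1}-1}\ \bigcup_{j=0}^{p_2^{n-1}-1} C_{p_2^n i+p_1^m j}\subseteq \mathbb{F}_q .$$ Then the set $\{\psi(\gamma^a D)\,:\, a=0,1,\dots,q-2\}$ has at most five elements, where $\psi(\gamma^aD)=\sum_{x\in D}\psi(\gamma^a x)$.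
   Context: $\psi$ denotes the canonical additive character of $\mathbb{F}_q$, $\psi(x)=\exp\!\big(2\pi i\,\mathrm{Tr}_{q/p}(x)/p\big)$, where $\mathrm{Tr}_{q/p}$ is the absolute trace from $\mathbb{F}_q$ to $\mathbb{F}_p$. $\mathrm{ord}_M(p)$ is the multiplicative order of $p$ modulo $M$. The sets $C_i$ are the cyclotomic classes of order $N$ of $\mathbb{F}_q$. *)

theory Defs
  imports Complex_Main "HOL-Number_Theory.Number_Theory"
begin

definition abs_trace :: "nat \<Rightarrow> nat \<Rightarrow> 'a::field \<Rightarrow> 'a" where
  "abs_trace p f x = (\<Sum>k<f. x ^ (p ^ k))"

text \<open>Canonical additive character psi(x) = exp(2 pi i Tr(x)/p), where Tr(x), an element
  of the prime field, is identified with the unique k < p such that of_nat k = Tr(x).\<close>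
definition can_add_char :: "nat \<Rightarrow> nat \<Rightarrow> 'a::field \<Rightarrow> complex" where
  "can_add_char p f x =
     cis (2 * pi * real (THE k. k < p \<and> of_nat k = abs_trace p f x) / real p)"

definition primitive_element :: "'a::field \<Rightarrow> bool" where
  "primitive_element g \<longleftrightarrow> g \<noteq> 0 \<and> (\<forall>x. x \<noteq> 0 \<longrightarrow> (\<exists>k::nat. x = g ^ k))"

definition cyc_class :: "'a::field \<Rightarrow> nat \<Rightarrow> nat \<Rightarrow> 'a set" where
  "cyc_class g N i = {g ^ i * (g ^ N) ^ k | k::nat. True}"

end

theory Submission
  imports Defs
begin

(*
  Write M1 = p1^m, M2 = p2^n, L1 = p1^(m-1), L2 = p2^(n-1), so N = M1 M2, and let
  G(t) = psi(C_t) be the Gauss period of the cyclotomic class C_t.  G depends only on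
  t mod N and is invariant under t |-> p t (Frobenius).  By the Chinese remainder
  theorem G is a function H(x, y) of a residue x mod M1 and a residue y mod M2,
  invariant under (x, y) |-> (p^k x, p^k y), and psi(gamma^a D) is the double sum
    S(a) = sum_{i<L1} sum_{j<L2} H(a + M2 i, a + M1 j).
  Since p is a primitive root modulo M1 and modulo M2 and gcd(phi M1, phi M2) divides 2
  (because ord_N(p) = phi(N)/2), H(p^e1 x, p^e2 y) = H(x, y) whenever e1 + e2 is even.
  Hence H(x, y) depends only on x mod L1 as long as L1 does not divide x, so in each inner
  sum all terms but one add up to a fixed sum over the residues {1..<L1}.  What remains
  of S(a) is determined by a pair (z1, z2) with L1 | z1, L2 | z2; such a pair lies in the
  p-orbit of (0 or L1, 0 or L2), and the parity constraint on the exponents leaves the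
  five representatives (0,0), (0,L2), (L1,0), (L1,L2), (p L1, L2).  The congruence
  conditions p1 = 1, p2 = 3 (mod 4) enter only through p1, p2 being odd and distinct.
*)

section \<open>Elementary congruences\<close>

lemma int_cong_one_pow_self:
  fixes y :: int and q :: nat
  assumes "[y = 1] (mod int q ^ s)" "s \<ge> 1"
  shows "[y ^ q = 1] (mod int q ^ Suc s)"
proof -
  have factor: "y ^ q - 1 = (y - 1) * (\<Sum>i<q. y ^ i)" by (simp add: power_diff_1_eq)
  have d1: "int q ^ s dvd y - 1" using assms(1) by (simp add: cong_iff_dvd_diff)
  have yq: "[y = 1] (mod int q)"
    using assms by (intro cong_dvd_modulus[OF assms(1)]) (simp add: dvd_power)
  have "[(\<Sum>i<q. y ^ i) = (\<Sum>i<q. 1)] (mod int q)"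
    by (rule cong_sum) (metis yq cong_pow power_one)
  hence "int q dvd (\<Sum>i<q. y ^ i) - int q" by (simp add: cong_iff_dvd_diff)
  hence d2: "int q dvd (\<Sum>i<q. y ^ i)"
    using dvd_add[of "int q" "(\<Sum>i<q. y ^ i) - int q" "int q"] by simp
  have "int q ^ s * int q dvd (y - 1) * (\<Sum>i<q. y ^ i)" using d1 d2 by (rule mult_dvd_mono)
  thus ?thesis using factor by (simp add: cong_iff_dvd_diff mult.commute)
qed

lemma cong_one_pow_power:
  fixes w q :: nat
  assumes "[w = 1] (mod q)"
  shows "[w ^ (q ^ j) = 1] (mod q ^ Suc j)"
proof -
  have "[int w ^ (q ^ j) = 1] (mod int q ^ Suc j)"
  proof (induction j)
    case 0 then show ?case using assms by (simp add: cong_int_iff[symmetric])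
  next
    case (Suc j)
    have "[(int w ^ (q ^ j)) ^ q = 1] (mod int q ^ Suc (Suc j))"
      by (rule int_cong_one_pow_self) (use Suc in auto)
    thus ?case by (simp add: power_mult[symmetric] mult.commute)
  qed
  thus ?thesis by (metis cong_int_iff of_nat_1 of_nat_power)
qed

lemma chinese_remainder_gcd:
  fixes a b :: nat and X Y :: int
  assumes "a > 0" "b > 0" "int (gcd a b) dvd X - Y"
  shows "\<exists>k::nat. [int k = X] (mod int a) \<and> [int k = Y] (mod int b)"
proof -
  obtain d where d: "X - Y = int (gcd a b) * d" using assms(3) by (auto elim: dvdE)
  obtain s t where st: "int (gcd a b) = s * int a + t * int b"
    using bezout_int[of "int a" "int b"] by (metis gcd_int_int_eq)
  define k0 where "k0 = X - d * s * int a"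
  have k0b: "k0 = Y + d * t * int b" unfolding k0_def using d st by (simp add: algebra_simps)
  define k where "k = k0 mod (int a * int b)"
  have "k \<ge> 0" unfolding k_def using assms by simp
  moreover have "[k = k0] (mod int a * int b)" unfolding k_def by simp
  hence "[k = k0] (mod int a)" and "[k = k0] (mod int b)"
    by (auto intro: cong_dvd_modulus)
  moreover have "[k0 = X] (mod int a)" unfolding k0_def by (simp add: cong_iff_dvd_diff)
  moreover have "[k0 = Y] (mod int b)" unfolding k0b by (simp add: cong_iff_dvd_diff)
  ultimately show ?thesis by (intro exI[of _ "nat k"]) (auto intro: cong_trans)
qed

lemma cong_prime_power_multiplier:
  fixes q x x' r :: nat
  assumes q: "prime q" and c: "[x = x'] (mod q ^ r)" and nd: "\<not> q ^ r dvd x"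
  shows "\<exists>w. [w = 1] (mod q) \<and> [w * x = x'] (mod q ^ Suc r)"
proof -
  have x0: "x \<noteq> 0" proof assume "x = 0" with nd show False by simp qed
  define v where "v = multiplicity q x"
  have vd: "q ^ v dvd x" unfolding v_def by (rule multiplicity_dvd)
  have vr: "v < r"
  proof (rule ccontr)
    assume "\<not> v < r" hence "q ^ r dvd q ^ v" by (simp add: le_imp_power_dvd)
    with vd nd show False using dvd_trans by blast
  qed
  define u where "u = x div q ^ v"
  have xu: "x = q ^ v * u" unfolding u_def using vd by simp
  have nqu: "\<not> q dvd u"
    unfolding u_def v_def using multiplicity_decompose[of x q] x0 q not_prime_unit by blast
  have "q ^ v dvd q ^ r" using vr by (simp add: le_imp_power_dvd)
  hence "[x = x'] (mod q ^ v)" by (rule cong_dvd_modulus_nat[OF c])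
  hence "q ^ v dvd x'" using vd by (simp add: cong_dvd_iff)
  then obtain u' where xu': "x' = q ^ v * u'" by (elim dvdE)
  have "q ^ r = q ^ v * q ^ (r - v)" using vr by (simp add: power_add[symmetric])
  hence "[q ^ v * u = q ^ v * u'] (mod q ^ v * q ^ (r - v))" using c xu xu' by simp
  hence "[u = u'] (mod q ^ (r - v))"
    using prime_gt_0_nat[OF q] by (simp add: cong_def mod_mult_mult1)
  hence uu': "[u = u'] (mod q)" by (rule cong_dvd_modulus_nat) (use vr in simp)
  have "coprime u q" using prime_imp_coprime[OF q nqu] by (simp add: ac_simps)
  hence cu: "coprime u (q ^ Suc r)" by simp
  obtain s where s: "[u * s = 1] (mod q ^ Suc r)" using cong_solve_coprime_nat[OF cu] by auto
  have "[u' * s = u * s] (mod q)" using uu' by (intro cong_scalar_right) (rule cong_sym)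
  moreover have "[u * s = 1] (mod q)" using s by (rule cong_dvd_modulus_nat) simp
  ultimately have w1: "[u' * s = 1] (mod q)" by (rule cong_trans)
  have "[q ^ v * u' * (u * s) = q ^ v * u' * 1] (mod q ^ Suc r)"
    using s by (rule cong_scalar_left)
  moreover have "(u' * s) * x = q ^ v * u' * (u * s)" unfolding xu by (simp only: ac_simps)
  ultimately have "[(u' * s) * x = x'] (mod q ^ Suc r)" by (simp only: xu' mult_1_right)
  thus ?thesis using w1 by blast
qed

lemma image_mod_eq_of_inj:
  fixes g :: "nat \<Rightarrow> nat" and L :: nat
  assumes inj: "\<And>r r'. r \<in> A \<Longrightarrow> r' \<in> A \<Longrightarrow> [g r = g r'] (mod L) \<Longrightarrow> r = r'"
    and img: "\<And>r. r \<in> A \<Longrightarrow> g r mod L \<in> B"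
    and fin: "finite B" and card: "card A = card B"
  shows "(\<lambda>r. g r mod L) ` A = B"
proof (rule card_subset_eq[OF fin])
  have "inj_on (\<lambda>r. g r mod L) A" using inj by (auto simp: inj_on_def cong_def)
  thus "card ((\<lambda>r. g r mod L) ` A) = card B" using card_image card by metis
qed (use img in auto)

lemma exists_progression_multiple:
  fixes K L a :: nat
  assumes "coprime K L" "L > 0"
  shows "\<exists>i0<L. L dvd a + K * i0"
proof -
  obtain s where s: "[K * s = 1] (mod L)" using cong_solve_coprime_nat[OF assms(1)] by auto
  define t where "t = L - a mod L"
  define i0 where "i0 = (t * s) mod L"
  have "[K * i0 = K * (t * s)] (mod L)" unfolding i0_def by (simp add: cong_def mod_mult_right_eq)
  moreover have "[K * (t * s) = t * (K * s)] (mod L)" by (simp add: ac_simps)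
  moreover have "[t * (K * s) = t * 1] (mod L)" using s by (rule cong_scalar_left)
  ultimately have "[K * i0 = t] (mod L)" by (metis cong_trans mult_1_right)
  hence "[a + K * i0 = a mod L + t] (mod L)" by (intro cong_add) (simp_all add: cong_def)
  moreover have "a mod L + t = L" unfolding t_def using assms(2) by simp
  ultimately have "L dvd a + K * i0" by (simp add: cong_def dvd_eq_mod_eq_0)
  moreover have "i0 < L" unfolding i0_def using assms(2) by simp
  ultimately show ?thesis by blast
qed

text \<open>Residues M2 i + M1 j (i < L1 \<le> M1, j < L2 \<le> M2) are pairwise incongruent modulo
  M1 M2; this makes the cyclotomic classes forming D pairwise distinct.\<close>

lemma crt_index_inj:
  fixes M1 M2 i i' j j' :: nat
  assumes cop: "coprime M1 M2" and i: "i < M1" "i' < M1" and j: "j < M2" "j' < M2"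
    and c: "[M2 * i + M1 * j = M2 * i' + M1 * j'] (mod M1 * M2)"
  shows "i = i' \<and> j = j'"
proof
  have "[M2 * i + M1 * j = M2 * i' + M1 * j'] (mod M1)" using c by (rule cong_modulus_mult_nat)
  hence "[M2 * i = M2 * i'] (mod M1)" by (simp add: cong_def)
  hence "[i = i'] (mod M1)" using cop by (simp add: cong_mult_lcancel_nat coprime_commute)
  thus "i = i'" using i by (simp add: cong_def)
  have "[M2 * i + M1 * j = M2 * i' + M1 * j'] (mod M2)"
    using c by (simp add: cong_modulus_mult_nat mult.commute[of M1])
  hence "[M1 * j = M1 * j'] (mod M2)" by (simp add: cong_def)
  hence "[j = j'] (mod M2)" using cop by (simp add: cong_mult_lcancel_nat)
  thus "j = j'" using j by (simp add: cong_def)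
qed

lemma totient_gcd_dvd_two:
  fixes p N M1 M2 :: nat
  assumes N: "N = M1 * M2" and cop: "coprime M1 M2" and M: "M1 > 0" "M2 > 0"
    and o1: "ord M1 p = totient M1" and o2: "ord M2 p = totient M2"
    and oN: "ord N p = totient N div 2" and ev: "even (totient M1)"
  shows "gcd (totient M1) (totient M2) dvd 2"
proof -
  let ?a = "totient M1" and ?b = "totient M2"
  let ?l = "lcm ?a ?b" and ?g = "gcd ?a ?b"
  have c1: "[p ^ ?l = 1] (mod M1)" by (rule ord_divides[THEN iffD2]) (simp add: o1)
  have c2: "[p ^ ?l = 1] (mod M2)" by (rule ord_divides[THEN iffD2]) (simp add: o2)
  have "[p ^ ?l = 1] (mod M1 * M2)" by (rule coprime_cong_mult_nat[OF c1 c2 cop])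
  hence "ord N p dvd ?l" unfolding N by (rule ord_divides[THEN iffD1])
  moreover have "?a > 0" "?b > 0" using M by simp_all
  ultimately have fl: "ord N p \<le> ?l" by (simp add: dvd_imp_le lcm_pos_nat)
  have f2: "2 * ord N p = ?a * ?b" using oN ev N cop by (simp add: totient_mult_coprime)
  have "?g * ord N p \<le> 2 * ord N p"
    using mult_le_mono2[OF fl, of ?g] f2 prod_gcd_lcm_nat[of ?a ?b] by linarith
  hence "?g * (?a * ?b) \<le> 2 * (?a * ?b)" unfolding f2[symmetric] by simp
  moreover have "?a * ?b > 0" using \<open>?a > 0\<close> \<open>?b > 0\<close> by simp
  ultimately have "?g \<le> 2" by simp
  moreover have "?g > 0" using \<open>?a > 0\<close> by simp
  ultimately have "?g = 1 \<or> ?g = 2" by linarith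
  thus ?thesis by auto
qed

lemma cong_int_diff_imp_cong_add:
  fixes k e e' t :: nat
  assumes "[int k = int e' - int e] (mod int t)"
  shows "[k + e = e'] (mod t)"
proof -
  have "[int k + int e = int e' - int e + int e] (mod int t)" by (rule cong_add[OF assms cong_refl])
  hence "[int (k + e) = int e'] (mod int t)" by simp
  thus ?thesis by (simp only: cong_int_iff)
qed

section \<open>A primitive root modulo a prime power\<close>

locale prime_power_primroot =
  fixes p q m :: nat
  assumes prime_q: "prime q" and m_pos: "m > 0"
    and ord_eq: "ord (q ^ m) p = totient (q ^ m)"
begin

lemma modulus_gt_1: "q ^ m > 1"
  by (rule one_less_power[OF prime_gt_1_nat[OF prime_q] m_pos])

lemma L_le: "q ^ (m - 1) \<le> q ^ m"
  using prime_gt_0_nat[OF prime_q] by (simp add: power_increasing)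

lemma totient_pos: "totient (q ^ m) > 0"
  using prime_gt_0_nat[OF prime_q] by simp

lemma modulus_eq: "q ^ m = q ^ (m - 1) * q"
  using m_pos by (cases m) auto

lemma coprime_modulus: "coprime (q ^ m) p"
proof -
  have "ord (q ^ m) p \<noteq> 0" using ord_eq totient_pos by simp
  thus ?thesis using ord_eq_0[of "q ^ m" p] by simp
qed

lemma coprime_p_q: "coprime p q"
proof -
  have "coprime q p" using coprime_modulus m_pos by simp
  thus ?thesis by (simp only: coprime_commute)
qed

lemma pow_cong_iff: "[p ^ e = p ^ e'] (mod q ^ m) \<longleftrightarrow> [e = e'] (mod totient (q ^ m))"
  using order_divides_expdiff[OF coprime_modulus] ord_eq by simp

lemma pow_surj:
  assumes "coprime w (q ^ m)"
  shows "\<exists>x. [p ^ x = w] (mod q ^ m)"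
proof -
  have "residue_primroot (q ^ m) p"
    using coprime_modulus ord_eq modulus_gt_1 prime_gt_0_nat[OF prime_q] by (simp add: residue_primroot_def)
  hence gen: "bij_betw (\<lambda>i. p ^ i mod (q ^ m)) {..<totient (q ^ m)} (totatives (q ^ m))"
    by (rule residue_primroot_is_generator[OF modulus_gt_1])
  have "w mod q ^ m \<noteq> 0"
  proof
    assume "w mod q ^ m = 0" hence "q ^ m dvd w" by auto
    hence "is_unit (q ^ m)" by (rule coprime_common_divisor[OF assms _ dvd_refl])
    with modulus_gt_1 show False by auto
  qed
  moreover have "coprime (w mod q ^ m) (q ^ m)"
    using assms coprime_mod_left_iff[of "q ^ m" w] prime_gt_0_nat[OF prime_q] by simp
  ultimately have "w mod q ^ m \<in> totatives (q ^ m)"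
    using modulus_gt_1 prime_gt_0_nat[OF prime_q] by (simp add: in_totatives_iff less_imp_le)
  hence "w mod q ^ m \<in> (\<lambda>i. p ^ i mod q ^ m) ` {..<totient (q ^ m)}"
    using gen unfolding bij_betw_def by simp
  then obtain i where "p ^ i mod q ^ m = w mod q ^ m" by (auto simp del: totient_gt_0_iff)
  thus ?thesis by (auto simp: cong_def)
qed

lemma orbit_rep:
  assumes "q ^ (m - 1) dvd z"
  shows "\<exists>x w. w \<in> {0, q ^ (m - 1)} \<and> [p ^ x * w = z] (mod q ^ m)"
proof (cases "q ^ m dvd z")
  case True
  hence "[p ^ 0 * 0 = z] (mod q ^ m)" by (simp add: cong_def)
  thus ?thesis by blast
next
  case False
  obtain e where e: "z = q ^ (m - 1) * e" using assms by (elim dvdE)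
  have "\<not> q dvd e" using False modulus_eq e by auto
  hence "coprime e (q ^ m)" using prime_imp_coprime[OF prime_q] by (simp add: ac_simps)
  then obtain x where "[p ^ x = e] (mod q ^ m)" using pow_surj by blast
  hence "[p ^ x * q ^ (m - 1) = z] (mod q ^ m)" unfolding e by (simp add: cong_scalar_right ac_simps)
  thus ?thesis by blast
qed

end

section \<open>Functions on pairs of residues invariant under p\<close>

text \<open>H(x, y) models a function of a residue x mod q1^m1 and a residue y mod q2^m2
  which is invariant under simultaneous multiplication by powers of p, where p is a
  primitive root modulo both prime powers and gcd(phi(q1^m1), phi(q2^m2)) divides 2.
  Results are stated for the first coordinate; the second one is covered by the
  interpretation with the coordinates swapped.\<close>

locale pair_period =
  P1: prime_power_primroot p q1 m1 + P2: prime_power_primroot p q2 m2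
  for p q1 m1 q2 m2 +
  fixes H :: "nat \<Rightarrow> nat \<Rightarrow> 'b::comm_monoid_add"
  assumes odd_q1: "odd q1"
    and totient_gcd: "gcd (totient (q1 ^ m1)) (totient (q2 ^ m2)) dvd 2"
    and H_mult: "\<And>k x y. H (p ^ k * x) (p ^ k * y) = H x y"
    and H_cong: "\<And>x x' y y'. [x = x'] (mod q1 ^ m1) \<Longrightarrow> [y = y'] (mod q2 ^ m2) \<Longrightarrow> H x y = H x' y'"
begin

text \<open>Independent powers of p may act on the two coordinates as long as the total
  exponent keeps its parity: the CRT for the moduli phi(q1^m1), phi(q2^m2) with gcd
  dividing 2 provides a common power of p realising both.\<close>

lemma H_exp_shift:
  assumes "even (e1 + e2 + e1' + e2')"
  shows "H (p ^ e1 * x) (p ^ e2 * y) = H (p ^ e1' * x) (p ^ e2' * y)"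
proof -
  let ?t1 = "totient (q1 ^ m1)" and ?t2 = "totient (q2 ^ m2)"
  obtain s where "e1 + e2 + e1' + e2' = 2 * s" using assms by (elim evenE)
  hence "int e1 + int e2 + int e1' + int e2' = 2 * int s" by (metis of_nat_add of_nat_mult of_nat_numeral)
  hence "(int e1' - int e1) - (int e2' - int e2) = 2 * (int s - int e1 - int e2')"
    by (simp add: algebra_simps)
  hence "(2::int) dvd (int e1' - int e1) - (int e2' - int e2)" by (simp only: dvd_triv_left)
  moreover have "int (gcd ?t1 ?t2) dvd int 2" using totient_gcd by (simp only: int_dvd_int_iff)
  ultimately have "int (gcd ?t1 ?t2) dvd (int e1' - int e1) - (int e2' - int e2)"
    by (simp add: dvd_trans)
  moreover note P1.totient_pos P2.totient_pos
  ultimately obtain k where k1: "[int k = int e1' - int e1] (mod int ?t1)"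
    and k2: "[int k = int e2' - int e2] (mod int ?t2)"
    using chinese_remainder_gcd by blast
  have "[p ^ (k + e1) = p ^ e1'] (mod q1 ^ m1)"
    using cong_int_diff_imp_cong_add[OF k1] P1.pow_cong_iff by blast
  hence "[p ^ (k + e1) * x = p ^ e1' * x] (mod q1 ^ m1)" by (rule cong_scalar_right)
  hence c1: "[p ^ k * (p ^ e1 * x) = p ^ e1' * x] (mod q1 ^ m1)" by (simp only: power_add mult.assoc)
  have "[p ^ (k + e2) = p ^ e2'] (mod q2 ^ m2)"
    using cong_int_diff_imp_cong_add[OF k2] P2.pow_cong_iff by blast
  hence "[p ^ (k + e2) * y = p ^ e2' * y] (mod q2 ^ m2)" by (rule cong_scalar_right)
  hence c2: "[p ^ k * (p ^ e2 * y) = p ^ e2' * y] (mod q2 ^ m2)" by (simp only: power_add mult.assoc)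
  have "H (p ^ e1 * x) (p ^ e2 * y) = H (p ^ k * (p ^ e1 * x)) (p ^ k * (p ^ e2 * y))"
    by (rule H_mult[symmetric])
  also have "\<dots> = H (p ^ e1' * x) (p ^ e2' * y)" by (rule H_cong[OF c1 c2])
  finally show ?thesis .
qed

text \<open>Away from multiples of q1^(m1-1), H depends on its first argument only modulo
  q1^(m1-1): the multiplier relating two such arguments is 1 mod q1, hence an even
  power of p modulo q1^m1, which H_exp_shift absorbs.\<close>

lemma H_first_residue:
  assumes "[x = x'] (mod q1 ^ (m1 - 1))" "\<not> q1 ^ (m1 - 1) dvd x"
  shows "H x y = H x' y"
proof -
  have m1: "Suc (m1 - 1) = m1" using P1.m_pos by simp
  obtain w where w1: "[w = 1] (mod q1)" and wx: "[w * x = x'] (mod q1 ^ m1)"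
    using cong_prime_power_multiplier[OF P1.prime_q assms] m1 by auto
  have "coprime w q1" using cong_imp_coprime[OF cong_sym[OF w1]] by simp
  hence "coprime w (q1 ^ m1)" by simp
  then obtain e where e: "[p ^ e = w] (mod q1 ^ m1)" using P1.pow_surj by blast
  have "[(p ^ e) ^ q1 ^ (m1 - 1) = w ^ q1 ^ (m1 - 1)] (mod q1 ^ m1)" using e by (rule cong_pow)
  moreover have "[w ^ (q1 ^ (m1 - 1)) = 1] (mod q1 ^ m1)" using cong_one_pow_power[OF w1] m1 by metis
  ultimately have "[p ^ (e * q1 ^ (m1 - 1)) = p ^ 0] (mod q1 ^ m1)"
    by (simp add: power_mult cong_trans)
  hence "[e * q1 ^ (m1 - 1) = 0] (mod totient (q1 ^ m1))" by (simp only: P1.pow_cong_iff)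
  hence "q1 ^ (m1 - 1) * (q1 - 1) dvd q1 ^ (m1 - 1) * e"
    by (simp add: cong_0_iff totient_prime_power[OF P1.prime_q P1.m_pos] mult.commute)
  hence "q1 - 1 dvd e" using prime_gt_0_nat[OF P1.prime_q] by simp
  moreover have "even (q1 - 1)" using odd_q1 by simp
  ultimately have ev: "even e" by (metis dvd_trans)
  have "[p ^ e * x = x'] (mod q1 ^ m1)" by (rule cong_trans[OF cong_scalar_right[OF e] wx])
  hence "H x' y = H (p ^ e * x) (p ^ 0 * y)" by (simp add: H_cong cong_sym)
  also have "\<dots> = H (p ^ 0 * x) (p ^ 0 * y)" by (rule H_exp_shift) (simp add: ev)
  finally show ?thesis by simp
qed

text \<open>Multiplication by p^k permutes the nonzero residues modulo q1^(m1-1), so it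
  leaves the sum of H over them unchanged.\<close>

lemma sum_first_pow_perm:
  "(\<Sum>r\<in>{1..<q1 ^ (m1 - 1)}. H (p ^ k * r) y) = (\<Sum>r\<in>{1..<q1 ^ (m1 - 1)}. H r y)"
proof -
  let ?L = "q1 ^ (m1 - 1)" and ?g = "\<lambda>r. p ^ k * r mod q1 ^ (m1 - 1)"
  have cp: "coprime ?L (p ^ k)" using P1.coprime_p_q by (simp add: coprime_commute)
  have nd: "\<not> ?L dvd p ^ k * r" if "r \<in> {1..<?L}" for r
    using that cp by (auto simp: coprime_dvd_mult_right_iff dest: dvd_imp_le)
  have img: "?g ` {1..<?L} = {1..<?L}"
  proof (rule image_mod_eq_of_inj)
    fix r r' assume r: "r \<in> {1..<?L}" "r' \<in> {1..<?L}" and c: "[p ^ k * r = p ^ k * r'] (mod ?L)"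
    have "[r = r'] (mod ?L)" using c cp by (simp add: cong_mult_lcancel_nat coprime_commute)
    thus "r = r'" using r by (simp add: cong_def)
  next
    fix r assume "r \<in> {1..<?L}"
    hence "?g r \<noteq> 0" using nd mod_0_imp_dvd by blast
    thus "?g r \<in> {1..<?L}"
      using prime_gt_0_nat[OF P1.prime_q] by (simp add: Suc_le_eq)
  qed auto
  have "inj_on ?g {1..<?L}" by (rule eq_card_imp_inj_on) (simp_all only: img finite_atLeastLessThan)
  hence "(\<Sum>r\<in>{1..<?L}. H (?g r) y) = (\<Sum>r\<in>{1..<?L}. H r y)"
    using sum.reindex[of ?g "{1..<?L}" "\<lambda>r. H r y"] img by simp
  moreover have "H (p ^ k * r) y = H (?g r) y" if "r \<in> {1..<?L}" for r
    by (rule H_first_residue) (use nd[OF that] in auto)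
  ultimately show ?thesis by simp
qed

definition col_rest :: "nat \<Rightarrow> 'b" where
  "col_rest y = (\<Sum>r\<in>{1..<q1 ^ (m1 - 1)}. H r y)"

lemma col_rest_cong: "[y = y'] (mod q2 ^ m2) \<Longrightarrow> col_rest y = col_rest y'"
  unfolding col_rest_def by (intro sum.cong refl H_cong cong_refl)

lemma col_rest_pow: "col_rest (p ^ k * y) = col_rest y"
proof -
  have "col_rest (p ^ k * y) = (\<Sum>r\<in>{1..<q1 ^ (m1 - 1)}. H (p ^ k * r) (p ^ k * y))"
    unfolding col_rest_def by (rule sum_first_pow_perm[symmetric])
  thus ?thesis unfolding col_rest_def H_mult .
qed

text \<open>Summing H over a progression a + K i (i < q1^(m1-1), K coprime to q1) in the first
  argument: the unique term divisible by q1^(m1-1) stays, every other term reduces to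
  its residue and these residues run through the nonzero residues once.\<close>

lemma inner_sum_split:
  assumes cK: "coprime K q1"
  shows "\<exists>z. q1 ^ (m1 - 1) dvd z \<and>
           (\<forall>y. (\<Sum>i<q1 ^ (m1 - 1). H (a + K * i) y) = H z y + col_rest y)"
proof -
  let ?L = "q1 ^ (m1 - 1)" and ?g = "\<lambda>i. (a + K * i) mod q1 ^ (m1 - 1)"
  have cKL: "coprime K ?L" using cK by simp
  obtain i0 where i0: "i0 < ?L" and d: "?L dvd a + K * i0"
    using exists_progression_multiple[OF cKL] prime_gt_0_nat[OF P1.prime_q] by auto
  have inj: "i = i'" if "i < ?L" "i' < ?L" "[a + K * i = a + K * i'] (mod ?L)" for i i'
  proof -
    have "[K * i = K * i'] (mod ?L)" using that(3) by (simp add: cong_add_lcancel_nat)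
    hence "[i = i'] (mod ?L)" using cKL by (simp add: cong_mult_lcancel_nat)
    thus ?thesis using that by (simp add: cong_def)
  qed
  have nd: "\<not> ?L dvd a + K * i" if "i \<in> {..<?L} - {i0}" for i
  proof
    assume "?L dvd a + K * i"
    hence "[a + K * i = a + K * i0] (mod ?L)" using d by (simp add: cong_def dvd_eq_mod_eq_0)
    with that i0 inj show False by auto
  qed
  have img: "?g ` ({..<?L} - {i0}) = {1..<?L}"
  proof (rule image_mod_eq_of_inj)
    fix i assume "i \<in> {..<?L} - {i0}"
    hence "?g i \<noteq> 0" using nd mod_0_imp_dvd by blast
    thus "?g i \<in> {1..<?L}"
      using prime_gt_0_nat[OF P1.prime_q] by (simp add: Suc_le_eq)
  qed (use inj i0 in auto)
  have inj_g: "inj_on ?g ({..<?L} - {i0})"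
    by (rule eq_card_imp_inj_on) (use img i0 in auto)
  have perm: "(\<Sum>i\<in>{..<?L} - {i0}. H (?g i) y) = col_rest y" for y
    unfolding col_rest_def using sum.reindex[OF inj_g, of "\<lambda>r. H r y"] img by simp
  have split: "(\<Sum>i<?L. H (a + K * i) y) = H (a + K * i0) y + col_rest y" for y
  proof -
    have "(\<Sum>i<?L. H (a + K * i) y) = H (a + K * i0) y + (\<Sum>i\<in>{..<?L} - {i0}. H (a + K * i) y)"
      using i0 by (simp add: sum.remove)
    also have "(\<Sum>i\<in>{..<?L} - {i0}. H (a + K * i) y) = (\<Sum>i\<in>{..<?L} - {i0}. H (?g i) y)"
      by (rule sum.cong[OF refl], rule H_first_residue) (use nd in auto)
    finally show ?thesis using perm by simp
  qed
  show ?thesis by (rule exI[of _ "a + K * i0"]) (use d split in simp)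
qed

end

section \<open>The five-value classification\<close>

locale pair_period_sym =
  A: pair_period p q1 m1 q2 m2 H + B: pair_period p q2 m2 q1 m1 "\<lambda>y x. H x y"
  for p q1 m1 q2 m2 and H :: "nat \<Rightarrow> nat \<Rightarrow> 'b::comm_monoid_add" +
  assumes coprime_primes: "coprime q1 q2"
begin

text \<open>What is left of the double sum once both inner sums have been split: it depends
  only on the two surviving residues z1 (first coordinate) and z2 (second).\<close>

definition reduced_sum :: "nat \<Rightarrow> nat \<Rightarrow> 'b" where
  "reduced_sum z1 z2 = H z1 z2 + B.col_rest z1 + A.col_rest z2
     + (\<Sum>r\<in>{1..<q1 ^ (m1 - 1)}. B.col_rest r)"

lemma reduced_sum_cong:
  assumes "[z1 = z1'] (mod q1 ^ m1)" "[z2 = z2'] (mod q2 ^ m2)"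
  shows "reduced_sum z1 z2 = reduced_sum z1' z2'"
  unfolding reduced_sum_def
  using A.H_cong[OF assms] B.col_rest_cong[OF assms(1)] A.col_rest_cong[OF assms(2)] by simp

lemma reduced_sum_exp_shift:
  assumes "even (e1 + e2 + e1' + e2')"
  shows "reduced_sum (p ^ e1 * z1) (p ^ e2 * z2) = reduced_sum (p ^ e1' * z1) (p ^ e2' * z2)"
  unfolding reduced_sum_def A.H_exp_shift[OF assms] A.col_rest_pow B.col_rest_pow ..

lemma double_sum_reduce:
  "\<exists>z1 z2. q1 ^ (m1 - 1) dvd z1 \<and> q2 ^ (m2 - 1) dvd z2 \<and>
     (\<Sum>i<q1 ^ (m1 - 1). \<Sum>j<q2 ^ (m2 - 1). H (a + q2 ^ m2 * i) (a + q1 ^ m1 * j))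
       = reduced_sum z1 z2"
proof -
  let ?L1 = "q1 ^ (m1 - 1)" and ?L2 = "q2 ^ (m2 - 1)"
  have "coprime (q2 ^ m2) q1" "coprime (q1 ^ m1) q2"
    using coprime_primes by (simp_all add: coprime_commute)
  then obtain z1 z2 where z1: "?L1 dvd z1"
      and sA: "\<And>y. (\<Sum>i<?L1. H (a + q2 ^ m2 * i) y) = H z1 y + A.col_rest y"
    and z2: "?L2 dvd z2"
      and sB: "\<And>x. (\<Sum>j<?L2. H x (a + q1 ^ m1 * j)) = H x z2 + B.col_rest x"
    using A.inner_sum_split B.inner_sum_split by meson
  have "(\<Sum>i<?L1. \<Sum>j<?L2. H (a + q2 ^ m2 * i) (a + q1 ^ m1 * j))
      = (\<Sum>j<?L2. H z1 (a + q1 ^ m1 * j)) + (\<Sum>j<?L2. A.col_rest (a + q1 ^ m1 * j))"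
    by (subst sum.swap) (simp only: sA sum.distrib)
  also have "(\<Sum>j<?L2. H z1 (a + q1 ^ m1 * j)) = H z1 z2 + B.col_rest z1" by (rule sB)
  also have "(\<Sum>j<?L2. A.col_rest (a + q1 ^ m1 * j))
      = (\<Sum>r\<in>{1..<?L1}. \<Sum>j<?L2. H r (a + q1 ^ m1 * j))"
    unfolding A.col_rest_def by (rule sum.swap)
  also have "\<dots> = (\<Sum>r\<in>{1..<?L1}. H r z2 + B.col_rest r)" by (rule sum.cong[OF refl sB])
  also have "H z1 z2 + B.col_rest z1 + \<dots> = reduced_sum z1 z2"
    unfolding reduced_sum_def A.col_rest_def sum.distrib by (simp add: ac_simps)
  finally show ?thesis using z1 z2 by blast
qed

text \<open>Classification: writing z1 = p^x w1 and z2 = p^y w2 with w1 \<in> {0, L1} and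
  w2 \<in> {0, L2}, the exponents may be moved to the first coordinate up to parity,
  and a parity defect disappears if either representative is 0.\<close>

lemma reduced_sum_cases:
  assumes "q1 ^ (m1 - 1) dvd z1" "q2 ^ (m2 - 1) dvd z2"
  shows "reduced_sum z1 z2 \<in> {reduced_sum 0 0, reduced_sum 0 (q2 ^ (m2 - 1)),
           reduced_sum (q1 ^ (m1 - 1)) 0, reduced_sum (q1 ^ (m1 - 1)) (q2 ^ (m2 - 1)),
           reduced_sum (p * q1 ^ (m1 - 1)) (q2 ^ (m2 - 1))}"
proof -
  obtain x w1 where w1: "w1 \<in> {0, q1 ^ (m1 - 1)}" and x: "[p ^ x * w1 = z1] (mod q1 ^ m1)"
    using A.P1.orbit_rep[OF assms(1)] by blast
  obtain y w2 where w2: "w2 \<in> {0, q2 ^ (m2 - 1)}" and y: "[p ^ y * w2 = z2] (mod q2 ^ m2)"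
    using A.P2.orbit_rep[OF assms(2)] by blast
  define c where "c = (x + y) mod 2"
  have "reduced_sum z1 z2 = reduced_sum (p ^ x * w1) (p ^ y * w2)"
    using reduced_sum_cong[OF x y] by simp
  also have "\<dots> = reduced_sum (p ^ c * w1) (p ^ 0 * w2)"
    by (rule reduced_sum_exp_shift) (simp add: c_def)
  finally have red: "reduced_sum z1 z2 = reduced_sum (p ^ c * w1) w2" by simp
  have "reduced_sum (p ^ 1 * w1) (p ^ 0 * 0) = reduced_sum (p ^ 0 * w1) (p ^ 1 * 0)"
    by (rule reduced_sum_exp_shift) simp
  hence "reduced_sum (p * w1) 0 = reduced_sum w1 0" by simp
  moreover have "c = 0 \<or> c = 1" unfolding c_def by auto
  ultimately show ?thesis using red w1 w2 by auto
qed

theorem five_values: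
  "(\<Sum>i<q1 ^ (m1 - 1). \<Sum>j<q2 ^ (m2 - 1). H (a + q2 ^ m2 * i) (a + q1 ^ m1 * j))
     \<in> {reduced_sum 0 0, reduced_sum 0 (q2 ^ (m2 - 1)),
        reduced_sum (q1 ^ (m1 - 1)) 0, reduced_sum (q1 ^ (m1 - 1)) (q2 ^ (m2 - 1)),
        reduced_sum (p * q1 ^ (m1 - 1)) (q2 ^ (m2 - 1))}"
  using double_sum_reduce[of a] reduced_sum_cases by metis

end

section \<open>Lifting a function along the Chinese remainder theorem\<close>

definition crt_lift :: "nat \<Rightarrow> nat \<Rightarrow> (nat \<Rightarrow> 'b) \<Rightarrow> nat \<Rightarrow> nat \<Rightarrow> 'b" where
  "crt_lift M1 M2 G x y = G (SOME t. [t = x] (mod M1) \<and> [t = y] (mod M2))"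

lemma crt_lift_eq:
  assumes cop: "coprime M1 M2"
    and G: "\<And>t t'. [t = t'] (mod M1 * M2) \<Longrightarrow> G t = G t'"
    and "[t = x] (mod M1)" "[t = y] (mod M2)"
  shows "crt_lift M1 M2 G x y = G t"
proof -
  define s where "s = (SOME t. [t = x] (mod M1) \<and> [t = y] (mod M2))"
  have "[s = x] (mod M1) \<and> [s = y] (mod M2)"
    unfolding s_def by (rule someI_ex[OF binary_chinese_remainder_nat[OF cop]])
  hence "[s = t] (mod M1)" "[s = t] (mod M2)" using assms(3,4) by (auto intro: cong_trans cong_sym)
  hence "[s = t] (mod M1 * M2)" using cop by (rule coprime_cong_mult_nat)
  thus ?thesis unfolding crt_lift_def s_def[symmetric] by (rule G)
qed

lemma crt_lift_cong:
  assumes cop: "coprime M1 M2" and G: "\<And>t t'. [t = t'] (mod M1 * M2) \<Longrightarrow> G t = G t'"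
    and "[x = x'] (mod M1)" "[y = y'] (mod M2)"
  shows "crt_lift M1 M2 G x y = crt_lift M1 M2 G x' y'"
proof -
  obtain t where t: "[t = x] (mod M1)" "[t = y] (mod M2)"
    using binary_chinese_remainder_nat[OF cop] by blast
  have "crt_lift M1 M2 G x y = G t" by (rule crt_lift_eq[OF cop G t])
  also have "\<dots> = crt_lift M1 M2 G x' y'"
    by (rule crt_lift_eq[OF cop G, symmetric]) (use t assms(3,4) in \<open>auto intro: cong_trans\<close>)
  finally show ?thesis .
qed

lemma crt_lift_mult:
  assumes cop: "coprime M1 M2" and G: "\<And>t t'. [t = t'] (mod M1 * M2) \<Longrightarrow> G t = G t'"
    and c: "\<And>t. G (c * t) = G t"
  shows "crt_lift M1 M2 G (c * x) (c * y) = crt_lift M1 M2 G x y"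
proof -
  obtain t where t: "[t = x] (mod M1)" "[t = y] (mod M2)"
    using binary_chinese_remainder_nat[OF cop] by blast
  have "crt_lift M1 M2 G (c * x) (c * y) = G (c * t)"
    by (rule crt_lift_eq[OF cop G]) (use t in \<open>auto intro: cong_scalar_left\<close>)
  also have "\<dots> = crt_lift M1 M2 G x y" unfolding c by (rule crt_lift_eq[OF cop G t, symmetric])
  finally show ?thesis .
qed

lemma crt_lift_progression:
  assumes cop: "coprime M1 M2" and G: "\<And>t t'. [t = t'] (mod M1 * M2) \<Longrightarrow> G t = G t'"
  shows "G (a + (M2 * i + M1 * j)) = crt_lift M1 M2 G (a + M2 * i) (a + M1 * j)"
proof -
  have "[a + (M2 * i + M1 * j) = a + M2 * i] (mod M1)" by (simp add: cong_def add.assoc[symmetric])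
  moreover have "[a + (M2 * i + M1 * j) = a + M1 * j] (mod M2)"
  proof -
    have "a + (M2 * i + M1 * j) = (a + M1 * j) + M2 * i" by (simp only: ac_simps)
    thus ?thesis unfolding cong_def by (simp only: mod_mult_self2)
  qed
  ultimately show ?thesis by (simp add: crt_lift_eq[OF cop G])
qed

section \<open>Cyclotomic classes and Gauss periods in a finite field\<close>

locale cyclotomic_setting =
  fixes p f N :: nat and \<gamma> :: "'a::{finite,field}"
  assumes card_field: "card (UNIV :: 'a set) = p ^ f"
    and primitive: "primitive_element \<gamma>"
    and prime_p: "prime p"
    and N_dvd: "N dvd p ^ f - 1"
begin

abbreviation Q :: nat where "Q \<equiv> p ^ f - 1"

lemma gamma_nonzero: "\<gamma> \<noteq> 0" using primitive unfolding primitive_element_def by simp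

lemma card_ge_2: "p ^ f \<ge> 2"
proof -
  have "card {0::'a, 1} \<le> card (UNIV :: 'a set)" by (rule card_mono) simp_all
  thus ?thesis using card_field by simp
qed

lemma f_pos: "f > 0" using card_ge_2 by (cases f) auto

lemma card_units: "card (UNIV - {0::'a}) = Q"
  using card_field by (simp add: card_Diff_singleton)

text \<open>gamma^Q = 1, since multiplication by gamma permutes the nonzero elements.\<close>

lemma gamma_pow_Q: "\<gamma> ^ Q = 1"
proof -
  let ?U = "UNIV - {0::'a}"
  have inj: "inj_on (\<lambda>x. \<gamma> * x) ?U" using gamma_nonzero by (auto simp: inj_on_def)
  have sub: "(\<lambda>x. \<gamma> * x) ` ?U \<subseteq> ?U" using gamma_nonzero by auto
  have img: "(\<lambda>x. \<gamma> * x) ` ?U = ?U" by (rule endo_inj_surj[OF _ sub inj]) simp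
  have "prod (\<lambda>x. x) ?U = prod (\<lambda>x. x) ((\<lambda>x. \<gamma> * x) ` ?U)" by (simp only: img)
  also have "\<dots> = \<gamma> ^ Q * prod (\<lambda>x. x) ?U"
    using prod.reindex[OF inj, of "\<lambda>x. x"] card_units by (simp add: prod.distrib)
  finally show ?thesis by (simp add: prod_zero_iff)
qed

lemma gamma_pow_mod: "\<gamma> ^ e = \<gamma> ^ (e mod Q)"
proof -
  have "\<gamma> ^ e = \<gamma> ^ (Q * (e div Q) + e mod Q)" by simp
  also have "\<dots> = (\<gamma> ^ Q) ^ (e div Q) * \<gamma> ^ (e mod Q)" by (simp only: power_add power_mult)
  finally show ?thesis using gamma_pow_Q by simp
qed

lemma gamma_pow_eq_iff: "\<gamma> ^ e = \<gamma> ^ e' \<longleftrightarrow> [e = e'] (mod Q)"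
proof -
  have "(\<lambda>k. \<gamma> ^ k) ` {..<Q} = UNIV - {0}"
  proof
    show "UNIV - {0} \<subseteq> (\<lambda>k. \<gamma> ^ k) ` {..<Q}"
    proof
      fix x :: 'a assume "x \<in> UNIV - {0}"
      then obtain k where "x = \<gamma> ^ k" using primitive unfolding primitive_element_def by auto
      moreover have "k mod Q < Q" using card_ge_2 by simp
      ultimately show "x \<in> (\<lambda>k. \<gamma> ^ k) ` {..<Q}" using gamma_pow_mod by auto
    qed
  qed (use gamma_nonzero in auto)
  hence inj: "inj_on (\<lambda>k. \<gamma> ^ k) {..<Q}" using card_units by (intro eq_card_imp_inj_on) simp_all
  have "e mod Q \<in> {..<Q}" "e' mod Q \<in> {..<Q}" using card_ge_2 by auto
  hence "\<gamma> ^ (e mod Q) = \<gamma> ^ (e' mod Q) \<longleftrightarrow> e mod Q = e' mod Q" using inj by (auto dest: inj_onD)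
  thus ?thesis by (simp only: gamma_pow_mod[of e] gamma_pow_mod[of e'] cong_def)
qed

lemma frobenius_power_id: "(x :: 'a) ^ (p ^ f) = x"
proof (cases "x = 0")
  case True thus ?thesis using prime_gt_0_nat[OF prime_p] by simp
next
  case False
  then obtain k where k: "x = \<gamma> ^ k" using primitive unfolding primitive_element_def by auto
  have "k * p ^ f = k + k * Q" using card_ge_2 by (simp add: diff_mult_distrib2)
  hence "[k * p ^ f = k] (mod Q)" by (simp add: cong_def)
  hence "\<gamma> ^ (k * p ^ f) = \<gamma> ^ k" using gamma_pow_eq_iff by blast
  thus ?thesis using k by (simp add: power_mult)
qed

lemma frobenius_inj: "inj_on (\<lambda>x :: 'a. x ^ p) A"
proof (rule inj_onI)
  fix x y :: 'a assume "x ^ p = y ^ p"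
  hence "(x ^ p) ^ (p ^ (f - 1)) = (y ^ p) ^ (p ^ (f - 1))" by simp
  moreover have "p * p ^ (f - 1) = p ^ f" using f_pos by (simp add: power_eq_if)
  ultimately have "x ^ (p ^ f) = y ^ (p ^ f)" by (simp add: power_mult[symmetric])
  thus "x = y" using frobenius_power_id by simp
qed

lemma trace_frobenius: "abs_trace p f (x ^ p) = abs_trace p f (x :: 'a)"
proof -
  let ?g = "\<lambda>k. x ^ (p ^ k)"
  have "abs_trace p f (x ^ p) = (\<Sum>k<f. ?g (Suc k))"
    unfolding abs_trace_def by (simp add: power_mult[symmetric] mult.commute)
  moreover have "(\<Sum>k<Suc f. ?g k) = ?g 0 + (\<Sum>k<f. ?g (Suc k))" by (rule sum.lessThan_Suc_shift)
  moreover have "?g f = ?g 0" using frobenius_power_id by simp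
  ultimately show ?thesis unfolding abs_trace_def by simp
qed

lemma char_frobenius: "can_add_char p f (x ^ p) = can_add_char p f (x :: 'a)"
  unfolding can_add_char_def using trace_frobenius by simp

lemma cyc_class_mem: "x \<in> cyc_class \<gamma> N t \<longleftrightarrow> (\<exists>e. x = \<gamma> ^ e \<and> [e = t] (mod N))"
proof
  assume "x \<in> cyc_class \<gamma> N t"
  then obtain k where "x = \<gamma> ^ (t + N * k)" unfolding cyc_class_def by (auto simp: power_add power_mult)
  moreover have "[t + N * k = t] (mod N)" by (simp add: cong_def)
  ultimately show "\<exists>e. x = \<gamma> ^ e \<and> [e = t] (mod N)" by blast
next
  assume "\<exists>e. x = \<gamma> ^ e \<and> [e = t] (mod N)"
  then obtain e where x: "x = \<gamma> ^ e" and e: "[e = t] (mod N)" by blast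
  \<comment> \<open>shift e by a multiple of Q (which N divides) so that it exceeds t\<close>
  define e' where "e' = e + Q * t"
  have "[e' = e] (mod Q)" unfolding e'_def by (simp add: cong_def)
  hence "\<gamma> ^ e' = \<gamma> ^ e" using gamma_pow_eq_iff by blast
  hence x': "x = \<gamma> ^ e'" using x by simp
  have "[Q * t = 0] (mod N)" using N_dvd by (simp add: cong_0_iff)
  from cong_add[OF e this] have "[e' = t] (mod N)" unfolding e'_def by simp
  moreover have "1 * t \<le> Q * t" using card_ge_2 by (intro mult_le_mono1) simp
  hence le: "t \<le> e'" unfolding e'_def by linarith
  ultimately obtain k where "e' - t = N * k" by (auto simp: cong_altdef_nat[OF le] elim: dvdE)
  hence "e' = t + N * k" using le by simp
  hence "x = \<gamma> ^ t * (\<gamma> ^ N) ^ k" using x' by (simp only: power_add power_mult)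
  thus "x \<in> cyc_class \<gamma> N t" unfolding cyc_class_def by blast
qed

lemma cyc_class_cong:
  assumes "[t = t'] (mod N)"
  shows "cyc_class \<gamma> N t = cyc_class \<gamma> N t'"
proof -
  have "[e = t] (mod N) \<longleftrightarrow> [e = t'] (mod N)" for e
    using assms by (meson cong_sym cong_trans)
  thus ?thesis by (simp only: set_eq_iff cyc_class_mem simp_thms)
qed

lemma cyc_class_disjoint:
  assumes "\<not> [t = t'] (mod N)"
  shows "cyc_class \<gamma> N t \<inter> cyc_class \<gamma> N t' = {}"
proof (rule ccontr)
  assume "cyc_class \<gamma> N t \<inter> cyc_class \<gamma> N t' \<noteq> {}"
  then obtain x where "x \<in> cyc_class \<gamma> N t" "x \<in> cyc_class \<gamma> N t'" by blast
  then obtain e e' where "\<gamma> ^ e = \<gamma> ^ e'" "[e = t] (mod N)" "[e' = t'] (mod N)"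
    unfolding cyc_class_mem by metis
  hence "[e = e'] (mod N)" "[e = t] (mod N)" "[e' = t'] (mod N)"
    using gamma_pow_eq_iff cong_dvd_modulus_nat[OF _ N_dvd] by blast+
  hence "[t = t'] (mod N)" by (meson cong_sym cong_trans)
  with assms show False by contradiction
qed

definition period :: "nat \<Rightarrow> complex" where
  "period t = (\<Sum>x\<in>cyc_class \<gamma> N t. can_add_char p f x)"

lemma period_cong: "[t = t'] (mod N) \<Longrightarrow> period t = period t'"
  unfolding period_def using cyc_class_cong by simp

lemma period_shift: "(\<Sum>x\<in>cyc_class \<gamma> N t. can_add_char p f (\<gamma> ^ a * x)) = period (a + t)"
proof -
  have img: "(\<lambda>x. \<gamma> ^ a * x) ` cyc_class \<gamma> N t = cyc_class \<gamma> N (a + t)"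
    unfolding cyc_class_def by (auto simp: power_add mult.assoc)
  have "inj_on (\<lambda>x. \<gamma> ^ a * x) (cyc_class \<gamma> N t)" using gamma_nonzero by (auto simp: inj_on_def)
  from sum.reindex[OF this, of "can_add_char p f"] show ?thesis
    unfolding period_def img by (simp add: comp_def)
qed

lemma frobenius_class: "(\<lambda>x. x ^ p) ` cyc_class \<gamma> N t = cyc_class \<gamma> N (p * t)"
proof
  show "(\<lambda>x. x ^ p) ` cyc_class \<gamma> N t \<subseteq> cyc_class \<gamma> N (p * t)"
  proof
    fix y assume "y \<in> (\<lambda>x. x ^ p) ` cyc_class \<gamma> N t"
    then obtain k where "y = (\<gamma> ^ t * (\<gamma> ^ N) ^ k) ^ p" unfolding cyc_class_def by blast
    hence "y = \<gamma> ^ (p * t) * (\<gamma> ^ N) ^ (k * p)"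
      by (simp add: power_mult_distrib power_mult[symmetric] ac_simps)
    thus "y \<in> cyc_class \<gamma> N (p * t)" unfolding cyc_class_def by blast
  qed
  show "cyc_class \<gamma> N (p * t) \<subseteq> (\<lambda>x. x ^ p) ` cyc_class \<gamma> N t"
  proof
    fix y assume "y \<in> cyc_class \<gamma> N (p * t)"
    then obtain k where y: "y = \<gamma> ^ (p * t) * (\<gamma> ^ N) ^ k" unfolding cyc_class_def by blast
    define x where "x = \<gamma> ^ t * (\<gamma> ^ N) ^ (k * p ^ (f - 1))"
    have pp1: "p * p ^ (f - 1) = p ^ f" using f_pos by (simp add: power_eq_if)
    have "x ^ p = \<gamma> ^ (p * t) * ((\<gamma> ^ N) ^ k) ^ (p ^ f)"
      unfolding x_def by (simp add: power_mult_distrib power_mult[symmetric] pp1[symmetric] ac_simps)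
    also have "\<dots> = y" using y frobenius_power_id by simp
    finally show "y \<in> (\<lambda>x. x ^ p) ` cyc_class \<gamma> N t"
      unfolding x_def cyc_class_def by blast
  qed
qed

lemma period_frobenius: "period (p * t) = period t"
proof -
  have "period (p * t) = (\<Sum>x\<in>cyc_class \<gamma> N t. can_add_char p f (x ^ p))"
    unfolding period_def frobenius_class[symmetric]
    using sum.reindex[OF frobenius_inj, of "can_add_char p f"] by (simp only: comp_def)
  thus ?thesis unfolding period_def char_frobenius .
qed

lemma period_pow: "period (p ^ k * t) = period t"
  by (induction k) (simp_all add: mult.assoc period_frobenius)

lemma char_sum_union:
  assumes N: "N = M1 * M2" and cop: "coprime M1 M2" and L: "L1 \<le> M1" "L2 \<le> M2"
  shows "(\<Sum>x\<in>(\<Union>i<L1. \<Union>j<L2. cyc_class \<gamma> N (M2 * i + M1 * j)). can_add_char p f (\<gamma> ^ a * x))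
       = (\<Sum>i<L1. \<Sum>j<L2. crt_lift M1 M2 period (a + M2 * i) (a + M1 * j))"
proof -
  let ?I = "{..<L1} \<times> {..<L2}" and ?C = "\<lambda>u. cyc_class \<gamma> N (M2 * fst u + M1 * snd u)"
  have D: "(\<Union>i<L1. \<Union>j<L2. cyc_class \<gamma> N (M2 * i + M1 * j)) = \<Union>(?C ` ?I)"
    unfolding UN_iff set_eq_iff by force
  have "?C u \<inter> ?C v = {}" if "u \<in> ?I" "v \<in> ?I" "u \<noteq> v" for u v
  proof (rule cyc_class_disjoint)
    obtain i j i' j' where uv: "u = (i, j)" "v = (i', j')" by (cases u, cases v)
    hence "i < M1" "i' < M1" "j < M2" "j' < M2" "\<not> (i = i' \<and> j = j')" using that L by auto
    thus "\<not> [M2 * fst u + M1 * snd u = M2 * fst v + M1 * snd v] (mod N)"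
      using crt_index_inj[OF cop] N uv by auto
  qed
  hence "(\<Sum>x\<in>\<Union>(?C ` ?I). can_add_char p f (\<gamma> ^ a * x))
      = (\<Sum>u\<in>?I. \<Sum>x\<in>?C u. can_add_char p f (\<gamma> ^ a * x))"
    by (intro sum.UNION_disjoint) auto
  also have "\<dots> = (\<Sum>u\<in>?I. period (a + (M2 * fst u + M1 * snd u)))" by (simp only: period_shift)
  also have "\<dots> = (\<Sum>i<L1. \<Sum>j<L2. period (a + (M2 * i + M1 * j)))"
    by (simp add: sum.cartesian_product split_def)
  also have "\<dots> = (\<Sum>i<L1. \<Sum>j<L2. crt_lift M1 M2 period (a + M2 * i) (a + M1 * j))"
    using crt_lift_progression[where G = period, OF cop period_cong] N by simp
  finally show ?thesis unfolding D .
qed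

lemma pair_period_sym_periods:
  assumes N: "N = q1 ^ m1 * q2 ^ m2"
    and "prime_power_primroot p q1 m1" "prime_power_primroot p q2 m2"
    and "odd q1" "odd q2" "coprime q1 q2"
    and "gcd (totient (q1 ^ m1)) (totient (q2 ^ m2)) dvd 2"
  shows "pair_period_sym p q1 m1 q2 m2 (crt_lift (q1 ^ m1) (q2 ^ m2) period)"
proof -
  let ?H = "crt_lift (q1 ^ m1) (q2 ^ m2) period"
  have cM: "coprime (q1 ^ m1) (q2 ^ m2)" using assms(6) by simp
  have per: "\<And>t t'. [t = t'] (mod q1 ^ m1 * q2 ^ m2) \<Longrightarrow> period t = period t'"
    using period_cong N by simp
  have H_mult: "?H (p ^ k * x) (p ^ k * y) = ?H x y" for k x y
    by (rule crt_lift_mult[where G = period, OF cM per period_pow])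
  have H_cong: "?H x y = ?H x' y'" if "[x = x'] (mod q1 ^ m1)" "[y = y'] (mod q2 ^ m2)" for x x' y y'
    by (rule crt_lift_cong[OF cM per that])
  show ?thesis
    by unfold_locales
      (use assms(2-7) H_mult H_cong in \<open>auto simp: gcd.commute prime_power_primroot_def\<close>)
qed

end

theorem theorem3p2:
  fixes p1 p2 m n p f N :: nat and \<gamma> :: "'a::{finite, field}" and D :: "'a set"
  assumes "prime p1" "prime p2"
    and "p1 mod 4 = 1" "p2 mod 4 = 3"
    and "m > 0" "n > 0"
    and "N = p1 ^ m * p2 ^ n"
    and "prime p"
    and "ord (p1 ^ m) p = totient (p1 ^ m)"
    and "ord (p2 ^ n) p = totient (p2 ^ n)"
    and "f = ord N p" "f = totient N div 2"
    and "card (UNIV :: 'a set) = p ^ f"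
    and "primitive_element \<gamma>"
    and "D = (\<Union>i<p1 ^ (m - 1). \<Union>j<p2 ^ (n - 1). cyc_class \<gamma> N (p2 ^ n * i + p1 ^ m * j))"
  shows "card ((\<lambda>a. \<Sum>x\<in>D. can_add_char p f (\<gamma> ^ a * x)) ` {0..card (UNIV :: 'a set) - 2}) \<le> 5"
proof -
  let ?M1 = "p1 ^ m" and ?M2 = "p2 ^ n"
  have odd: "odd p1" "odd p2" using assms(3,4) by presburger+
  have "coprime p1 p2" using assms(1-4) by (intro primes_coprime) auto
  hence cM: "coprime ?M1 ?M2" by simp
  have P1: "prime_power_primroot p p1 m" and P2: "prime_power_primroot p p2 n"
    using assms(1,2,5,6,9,10) by (simp_all add: prime_power_primroot_def)
  have "even (totient ?M1)" using odd(1) totient_prime_power[OF assms(1,5)] by simp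
  hence gcd2: "gcd (totient ?M1) (totient ?M2) dvd 2"
    using assms(1,2,11,12) by (intro totient_gcd_dvd_two[OF assms(7) cM _ _ assms(9,10)])
      (simp_all add: prime_gt_0_nat)
  have "[p ^ f = 1] (mod N)" by (rule ord_divides[THEN iffD2]) (simp add: assms(11))
  moreover have "1 \<le> p ^ f" using prime_gt_0_nat[OF assms(8)] by simp
  ultimately have "N dvd p ^ f - 1" by (simp add: cong_altdef_nat)
  then interpret C: cyclotomic_setting p f N \<gamma> using assms(8,13,14) by unfold_locales
  interpret pair_period_sym p p1 m p2 n "crt_lift ?M1 ?M2 C.period"
    using C.pair_period_sym_periods[OF assms(7) P1 P2 odd \<open>coprime p1 p2\<close> gcd2] .
  let ?V = "[reduced_sum 0 0, reduced_sum 0 (p2 ^ (n - 1)), reduced_sum (p1 ^ (m - 1)) 0,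
     reduced_sum (p1 ^ (m - 1)) (p2 ^ (n - 1)), reduced_sum (p * p1 ^ (m - 1)) (p2 ^ (n - 1))]"
  have "(\<Sum>x\<in>D. can_add_char p f (\<gamma> ^ a * x)) \<in> set ?V" for a
    using five_values[of a]
    unfolding assms(15) C.char_sum_union[OF assms(7) cM prime_power_primroot.L_le[OF P1]
        prime_power_primroot.L_le[OF P2]] by simp
  hence "card ((\<lambda>a. \<Sum>x\<in>D. can_add_char p f (\<gamma> ^ a * x)) ` {0..card (UNIV :: 'a set) - 2})
      \<le> card (set ?V)" by (intro card_mono) auto
  also have "\<dots> \<le> 5" using card_length[of ?V] by simp
  finally show ?thesis .
qed

end
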